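(* Identify the tangent space of $\mathbb OH^2$ at $P_0=(0,0)$ with $\mathbb O^2$, a pair $(a,b)$ corresponding to the tangent vector with $du=a$, $dv=b$. Then the Riemann curvature tensor of $\mathbb OH^2$ at $P_0$ is $$\begin{aligned}R\big((a,b),(c,d),(e,f),(g,h)\big)=-\Big[&\,4\langle a,e\rangle\langle c,g\rangle-4\langle c,e\rangle\langle a,g\rangle+4\langle b,f\rangle\langle d,h\rangle-4\langle d,f\rangle\langle b,h\rangle\\&-\langle e\bar d,g\bar b\rangle+\langle e\bar b,g\bar d\rangle-\langle c\bar f,a\bar h\rangle+\langle a\bar f,c\bar h\rangle-\langle a\bar d-c\bar b,\ g\bar f-e\bar h\rangle\Big],\end{aligned}$$ i.e. the negative of the curvature tensor of $\mathbb OP^2$ at $[1,0,0]$.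
   Context: Octonions $\mathbb O=\mathbb H\oplus\mathbb H$ with product $(q_1,q_2)(p_1,p_2)=(q_1p_1-\bar p_2q_2,\ p_2q_1+q_2\bar p_1)$, conjugation $\overline{(q_1,q_2)}=(\bar q_1,-q_2)$, $\langle a,b\rangle=\mathrm{Re}(a\bar b)$, $|a|^2=\langle a,a\rangle$. $\mathbb OH^2=\{(u,v)\in\mathbb O^2:|u|^2+|v|^2<1\}$ with the Riemannian metric whose quadratic form on tangent vectors $(du,dv)=(\xi,\eta)$ is $ds^2=\frac{|\xi|^2(1-|v|^2)+|\eta|^2(1-|u|^2)+2\mathrm{Re}[(u\bar v)(\eta\bar\xi)]}{(1-|u|^2-|v|^2)^2}$. Curvature convention: in coordinates in which first derivatives of the metric vanish at the point, $R_{\alpha\beta\gamma\delta}=\tfrac12\big[\partial_\alpha\partial_\delta g_{\beta\gamma}+\partial_\beta\partial_\gamma g_{\alpha\delta}-\partial_\beta\partial_\delta g_{\alpha\gamma}-\partial_\alpha\partial_\gamma g_{\beta\delta}\big]$. *)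

theory Defs
  imports "HOL-Analysis.Analysis"
begin

datatype quat = Quat (qre: real) (qi: real) (qj: real) (qk: real)

definition qadd :: "quat \<Rightarrow> quat \<Rightarrow> quat" where
  "qadd p q = Quat (qre p + qre q) (qi p + qi q) (qj p + qj q) (qk p + qk q)"

definition qneg :: "quat \<Rightarrow> quat" where
  "qneg p = Quat (- qre p) (- qi p) (- qj p) (- qk p)"

definition qscale :: "real \<Rightarrow> quat \<Rightarrow> quat" where
  "qscale r p = Quat (r * qre p) (r * qi p) (r * qj p) (r * qk p)"

definition qcnj :: "quat \<Rightarrow> quat" where
  "qcnj p = Quat (qre p) (- qi p) (- qj p) (- qk p)"

definition qmul :: "quat \<Rightarrow> quat \<Rightarrow> quat" where
  "qmul p q = Quat
     (qre p * qre q - qi p * qi q - qj p * qj q - qk p * qk q)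
     (qre p * qi q + qi p * qre q + qj p * qk q - qk p * qj q)
     (qre p * qj q - qi p * qk q + qj p * qre q + qk p * qi q)
     (qre p * qk q + qi p * qj q - qj p * qi q + qk p * qre q)"

section \<open>Octonions O = H + H (Cayley--Dickson)\<close>

type_synonym oct = "quat \<times> quat"

definition oadd :: "oct \<Rightarrow> oct \<Rightarrow> oct" where
  "oadd x y = (qadd (fst x) (fst y), qadd (snd x) (snd y))"

definition oneg :: "oct \<Rightarrow> oct" where
  "oneg x = (qneg (fst x), qneg (snd x))"

definition osub :: "oct \<Rightarrow> oct \<Rightarrow> oct" where
  "osub x y = oadd x (oneg y)"

definition oscale :: "real \<Rightarrow> oct \<Rightarrow> oct" where
  "oscale r x = (qscale r (fst x), qscale r (snd x))"

definition ozero :: oct where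
  "ozero = (Quat 0 0 0 0, Quat 0 0 0 0)"

definition omul :: "oct \<Rightarrow> oct \<Rightarrow> oct" where
  "omul x y = (case x of (q1, q2) \<Rightarrow> case y of (p1, p2) \<Rightarrow>
      (qadd (qmul q1 p1) (qneg (qmul (qcnj p2) q2)),
       qadd (qmul p2 q1) (qmul q2 (qcnj p1))))"

definition ocnj :: "oct \<Rightarrow> oct" where
  "ocnj x = (qcnj (fst x), qneg (snd x))"

definition ore :: "oct \<Rightarrow> real" where
  "ore x = qre (fst x)"

definition oinner :: "oct \<Rightarrow> oct \<Rightarrow> real" where
  "oinner a b = ore (omul a (ocnj b))"

definition onorm2 :: "oct \<Rightarrow> real" where
  "onorm2 a = oinner a a"

text \<open>Points and tangent vectors are pairs of octonions (u,v), resp. (du,dv).\<close>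

definition padd :: "oct \<times> oct \<Rightarrow> oct \<times> oct \<Rightarrow> oct \<times> oct" where
  "padd X Y = (oadd (fst X) (fst Y), oadd (snd X) (snd Y))"

definition pscale :: "real \<Rightarrow> oct \<times> oct \<Rightarrow> oct \<times> oct" where
  "pscale r X = (oscale r (fst X), oscale r (snd X))"

definition OH2 :: "(oct \<times> oct) set" where
  "OH2 = {(u, v). onorm2 u + onorm2 v < 1}"

definition P0 :: "oct \<times> oct" where
  "P0 = (ozero, ozero)"

text \<open>Quadratic form ds^2 of the metric at the point (u,v) on the tangent vector (xi,eta).\<close>
definition OH2_Q :: "oct \<times> oct \<Rightarrow> oct \<times> oct \<Rightarrow> real" where
  "OH2_Q P T = (case P of (u, v) \<Rightarrow> case T of (\<xi>, \<eta>) \<Rightarrow>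
     (onorm2 \<xi> * (1 - onorm2 v) + onorm2 \<eta> * (1 - onorm2 u)
       + 2 * ore (omul (omul u (ocnj v)) (omul \<eta> (ocnj \<xi>))))
     / (1 - onorm2 u - onorm2 v)^2)"

definition OH2_g :: "oct \<times> oct \<Rightarrow> oct \<times> oct \<Rightarrow> oct \<times> oct \<Rightarrow> real" where
  "OH2_g P X Y = (OH2_Q P (padd X Y) - OH2_Q P (padd X (pscale (-1) Y))) / 4"

definition d2g :: "oct \<times> oct \<Rightarrow> oct \<times> oct \<Rightarrow> oct \<times> oct \<Rightarrow> oct \<times> oct \<Rightarrow> real" where
  "d2g A B C D =
     deriv (\<lambda>t. deriv (\<lambda>s. OH2_g (padd P0 (padd (pscale t A) (pscale s B))) C D) 0) 0"

text \<open>The first derivatives of the metric coefficients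
  vanish at P0 in the linear coordinates (u,v), so the paper's convention
  R_{abcd} = 1/2 [d_a d_d g_bc + d_b d_c g_ad - d_b d_d g_ac - d_a d_c g_bd]
  applies in these coordinates; contracted with X^a Y^b Z^c W^d it reads as below.\<close>
definition OH2_R_P0 :: "oct \<times> oct \<Rightarrow> oct \<times> oct \<Rightarrow> oct \<times> oct \<Rightarrow> oct \<times> oct \<Rightarrow> real" where
  "OH2_R_P0 X Y Z W =
     (d2g X W Y Z + d2g Y Z X W - d2g Y W X Z - d2g X Z Y W) / 2"

end

theory Submission
  imports Defs
begin

(* At P0 the metric is Euclidean, and on the plane spanned by A and B through P0 the metric
   coefficient g(C,D) is N(t,s) / (1 - Q(t,s))^2 with N, Q quadratic polynomials and Q(0) = 0.
   Its mixed derivative at 0 is therefore the ts-coefficient of N plus 2 N(0) times that of Q,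
   which gives, for A = (A1, A2) etc.,
     d_A d_B g(C,D) = 4 <A,B> <C,D> - 2 <A2,B2> <C1,D1> - 2 <A1,B1> <C2,D2>
                      + <A1 conj B2 + B1 conj A2, D1 conj C2 + C1 conj D2>.
   Inserting this into the curvature formula, the result is brought into the stated shape by
   the polarised multiplicativity of the octonion norm,
     <x conj y, z conj w> + <x conj w, z conj y> = 2 <x,z> <y,w>,
   which survives the failure of associativity. *)

lemma oct_coordinates:
  obtains x0 x1 x2 x3 x4 x5 x6 x7 where "x = (Quat x0 x1 x2 x3, Quat x4 x5 x6 x7)"
  by (metis prod.exhaust quat.exhaust)

lemmas oct_simps = omul_def oadd_def oscale_def ocnj_def ore_def oneg_def ozero_def
  qadd_def qmul_def qneg_def qcnj_def qscale_def

lemma omul_oadd_left: "omul (oadd x y) z = oadd (omul x z) (omul y z)"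
  by (cases x; cases y; cases z) (simp add: oct_simps algebra_simps)

lemma omul_oadd_right: "omul z (oadd x y) = oadd (omul z x) (omul z y)"
  by (cases x; cases y; cases z) (simp add: oct_simps algebra_simps)

lemma omul_oscale_left: "omul (oscale r x) z = oscale r (omul x z)"
  by (cases x; cases z) (simp add: oct_simps algebra_simps)

lemma omul_oscale_right: "omul z (oscale r x) = oscale r (omul z x)"
  by (cases x; cases z) (simp add: oct_simps algebra_simps)

lemma ocnj_oadd: "ocnj (oadd x y) = oadd (ocnj x) (ocnj y)"
  by (cases x; cases y) (simp add: oct_simps)

lemma ocnj_oscale: "ocnj (oscale r x) = oscale r (ocnj x)"
  by (cases x) (simp add: oct_simps)

lemma ocnj_ocnj [simp]: "ocnj (ocnj x) = x"
  by (cases x) (simp add: oct_simps)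

lemma ocnj_omul: "ocnj (omul x y) = omul (ocnj y) (ocnj x)"
  by (cases x; cases y) (simp add: oct_simps algebra_simps)

lemma ore_oadd: "ore (oadd x y) = ore x + ore y"
  by (cases x; cases y) (simp add: oct_simps)

lemma ore_oscale: "ore (oscale r x) = r * ore x"
  by (cases x) (simp add: oct_simps)

lemma oadd_ozero_left: "oadd ozero x = x"
  by (cases x) (simp add: oct_simps)

lemma oneg_eq_oscale: "oneg x = oscale (-1) x"
  by (cases x) (simp add: oct_simps)

lemma oinner_commute: "oinner x y = oinner y x"
  by (cases x; cases y) (simp add: oinner_def oct_simps algebra_simps)

lemma oinner_oadd_left: "oinner (oadd x y) z = oinner x z + oinner y z"
  by (simp add: oinner_def omul_oadd_left ore_oadd)

lemma oinner_oadd_right: "oinner z (oadd x y) = oinner z x + oinner z y"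
  by (simp add: oinner_def omul_oadd_right ore_oadd ocnj_oadd)

lemma oinner_oscale_left: "oinner (oscale r x) z = r * oinner x z"
  by (simp add: oinner_def omul_oscale_left ore_oscale)

lemma oinner_oscale_right: "oinner z (oscale r x) = r * oinner z x"
  by (simp add: oinner_def omul_oscale_right ore_oscale ocnj_oscale)

lemma ore_omul: "ore (omul x y) = oinner x (ocnj y)"
  by (simp add: oinner_def)

lemmas oinner_bilinear = oinner_oadd_left oinner_oadd_right oinner_oscale_left oinner_oscale_right
lemmas omul_bilinear = omul_oadd_left omul_oadd_right omul_oscale_left omul_oscale_right
  ocnj_oadd ocnj_oscale

lemma oinner_omul_ocnj_polarized:
  "oinner (omul x (ocnj y)) (omul z (ocnj w)) + oinner (omul x (ocnj w)) (omul z (ocnj y))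
     = 2 * oinner x z * oinner y w"
proof -
  obtain x0 x1 x2 x3 x4 x5 x6 x7 where x: "x = (Quat x0 x1 x2 x3, Quat x4 x5 x6 x7)"
    by (rule oct_coordinates)
  obtain y0 y1 y2 y3 y4 y5 y6 y7 where y: "y = (Quat y0 y1 y2 y3, Quat y4 y5 y6 y7)"
    by (rule oct_coordinates)
  obtain z0 z1 z2 z3 z4 z5 z6 z7 where z: "z = (Quat z0 z1 z2 z3, Quat z4 z5 z6 z7)"
    by (rule oct_coordinates)
  obtain w0 w1 w2 w3 w4 w5 w6 w7 where w: "w = (Quat w0 w1 w2 w3, Quat w4 w5 w6 w7)"
    by (rule oct_coordinates)
  show ?thesis
    unfolding x y z w by (simp add: oinner_def oct_simps) algebra
qed

lemma OH2_g_Pair: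
  "OH2_g (u, v) (C1, C2) (D1, D2) =
     (oinner C1 D1 * (1 - onorm2 v) + oinner C2 D2 * (1 - onorm2 u)
      + oinner (omul u (ocnj v)) (oadd (omul D1 (ocnj C2)) (omul C1 (ocnj D2))))
     / (1 - onorm2 u - onorm2 v)^2"
proof -
  have polarize: "X - Y = 4 * N \<Longrightarrow> (X / E - Y / E) / 4 = N / E" for X Y N E :: real
    by (simp add: diff_divide_distrib[symmetric])
  show ?thesis
    unfolding OH2_g_def OH2_Q_def padd_def pscale_def fst_conv snd_conv prod.case
    by (rule polarize) (simp add: onorm2_def ore_oadd ore_oscale ore_omul ocnj_omul omul_bilinear oinner_bilinear
        algebra_simps oinner_commute)
qed

lemma deriv_deriv_quadratic_quotient_at_0:
  fixes F :: "real \<Rightarrow> real \<Rightarrow> real"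
  assumes F: "\<And>t s. F t s =
    (c0 + a1 * t^2 + a2 * t * s + a3 * s^2) / (1 - (b1 * t^2 + b2 * t * s + b3 * s^2))^2"
  shows "deriv (\<lambda>t. deriv (\<lambda>s. F t s) 0) 0 = a2 + 2*c0*b2"
proof -
  define G where "G t = t * (a2 / (1 - b1*t^2)^2 + 2*b2*(c0 + a1*t^2) / (1 - b1*t^2)^3)" for t
  have deriv_s: "deriv (\<lambda>s. F t s) 0 = G t" if "1 - b1*t^2 \<noteq> 0" for t
  proof (rule DERIV_imp_deriv)
    have "(a2*t*D^2 + N*(2*(b2*t*D))) / D^4 = t*(a2/D^2 + 2*b2*N/D^3)" if "D \<noteq> 0" for D N :: real
      using that by (simp add: field_simps eval_nat_numeral)
    then show "((\<lambda>s. F t s) has_field_derivative G t) (at 0)"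
      unfolding F G_def using that
      by (auto intro!: derivative_eq_intros)
  qed
  have "(G has_field_derivative a2 + 2*c0*b2) (at 0)"
    unfolding G_def by (auto intro!: derivative_eq_intros)
  then have "((\<lambda>t. deriv (\<lambda>s. F t s) 0) has_field_derivative a2 + 2*c0*b2) (at 0)"
  proof (rule has_field_derivative_transform_within_open)
    show "open {t. 1 - b1*t^2 \<noteq> (0::real)}"
      by (intro open_Collect_neq continuous_intros)
  qed (use deriv_s in auto)
  then show ?thesis
    by (rule DERIV_imp_deriv)
qed

lemma d2g_Pair:
  "d2g (A1, A2) (B1, B2) (C1, C2) (D1, D2) =
     4 * (oinner A1 B1 + oinner A2 B2) * (oinner C1 D1 + oinner C2 D2)
     - 2 * oinner A2 B2 * oinner C1 D1 - 2 * oinner A1 B1 * oinner C2 D2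
     + oinner (oadd (omul A1 (ocnj B2)) (omul B1 (ocnj A2)))
              (oadd (omul D1 (ocnj C2)) (omul C1 (ocnj D2)))"
proof -
  define Z where "Z = oadd (omul D1 (ocnj C2)) (omul C1 (ocnj D2))"
  have "d2g (A1, A2) (B1, B2) (C1, C2) (D1, D2) =
    - 2 * oinner A2 B2 * oinner C1 D1 - 2 * oinner A1 B1 * oinner C2 D2
    + oinner (oadd (omul A1 (ocnj B2)) (omul B1 (ocnj A2))) Z
    + 2 * (oinner C1 D1 + oinner C2 D2) * (2 * oinner A1 B1 + 2 * oinner A2 B2)"
    unfolding d2g_def
  proof (rule deriv_deriv_quadratic_quotient_at_0)
    fix t s :: real
    have "padd P0 (padd (pscale t (A1, A2)) (pscale s (B1, B2))) =
        (oadd (oscale t A1) (oscale s B1), oadd (oscale t A2) (oscale s B2))"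
      by (simp add: padd_def pscale_def P0_def oadd_ozero_left)
    then show "OH2_g (padd P0 (padd (pscale t (A1, A2)) (pscale s (B1, B2)))) (C1, C2) (D1, D2) =
      ((oinner C1 D1 + oinner C2 D2)
       + (- onorm2 A2 * oinner C1 D1 - onorm2 A1 * oinner C2 D2
          + oinner (omul A1 (ocnj A2)) Z) * t^2
       + (- 2 * oinner A2 B2 * oinner C1 D1 - 2 * oinner A1 B1 * oinner C2 D2
          + oinner (oadd (omul A1 (ocnj B2)) (omul B1 (ocnj A2))) Z) * t * s
       + (- onorm2 B2 * oinner C1 D1 - onorm2 B1 * oinner C2 D2
          + oinner (omul B1 (ocnj B2)) Z) * s^2)
      / (1 - ((onorm2 A1 + onorm2 A2) * t^2 + (2 * oinner A1 B1 + 2 * oinner A2 B2) * t * s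
              + (onorm2 B1 + onorm2 B2) * s^2))^2"
      by (simp add: OH2_g_Pair Z_def[symmetric] onorm2_def omul_bilinear oinner_bilinear
          oinner_commute power2_eq_square algebra_simps)
  qed
  then show ?thesis
    by (simp add: Z_def algebra_simps)
qed

theorem theorem8p4:
  fixes a b c d e f g h :: oct
  shows "OH2_R_P0 (a, b) (c, d) (e, f) (g, h) =
    - (4 * oinner a e * oinner c g - 4 * oinner c e * oinner a g
       + 4 * oinner b f * oinner d h - 4 * oinner d f * oinner b h
       - oinner (omul e (ocnj d)) (omul g (ocnj b))
       + oinner (omul e (ocnj b)) (omul g (ocnj d))
       - oinner (omul c (ocnj f)) (omul a (ocnj h))
       + oinner (omul a (ocnj f)) (omul c (ocnj h))
       - oinner (osub (omul a (ocnj d)) (omul c (ocnj b)))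
                (osub (omul g (ocnj f)) (omul e (ocnj h))))"
  using oinner_omul_ocnj_polarized[of a h e d] oinner_omul_ocnj_polarized[of g b c f]
    oinner_omul_ocnj_polarized[of c h e b] oinner_omul_ocnj_polarized[of a f g d]
  unfolding OH2_R_P0_def d2g_Pair osub_def oneg_eq_oscale
  by (simp add: oinner_bilinear omul_bilinear oinner_commute algebra_simps) algebra

end
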